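(* Assume the standing setting below. Let $\alpha\in(0,1/6]$ with $\alpha n$ an integer, let $P_1,P_2\subseteq X$ be disjoint with $|P_1|=|P_2|=\alpha n$, and let $T\subseteq X$ be nonempty. Let $F_c:=\mathrm{far}_{4(k+1)\phi_\alpha}(X\setminus P_1,T)$ and let $\mathcal{B}_c=(\mathcal{B}_c(1),\ldots,\mathcal{B}_c(L))$ be a $(\phi_\alpha/3)$-linear bin division of $(X\setminus P_1)\setminus F_c$ with respect to $T$. If $\mathcal{B}_c$ is well-represented in $P_2$ for $X\setminus P_1$, then for all $i\in[L-1]$, $$R(\mathcal{B}_c(i)\cap P_2,T)\ge\frac\alpha3\,R(\mathcal{B}_c(i+1),T).$$
   Context: Standing setting: $(X,\rho)$ is a finite metric space with $|X|=n$; $k\ge2$ is an integer and $\delta\in(0,1)$; $\log$ is the natural logarithm; for $\alpha>0$, $\phi_\alpha:=150\log(32k/\delta)/\alpha$. For nonempty $T\subseteq X$, $\rho(x,T):=\min_{y\in T}\rho(x,y)$ and $R(S,T):=\sum_{x\in S}\rho(x,T)$; ties are broken by a fixed ordering of $X$. For $S\subseteq X$ and real $r\ge0$, $\mathrm{far}_r(S,T)$ is the set of the $\lceil r\rceil$ points of $S$ furthest from $T$; if $|S|<r$, $\mathrm{far}_r(S,T):=S$ (trivial far set). For finite $W$, $A,B\subseteq W$, $B$ is well-represented in $A$ for $W$ if $|B\cap A|/|B|\in[r/2,\frac32 r]$ with $r=|A|/|W|$; a bin division is well-represented if all its bins are. A $z$-linear bin division ($z>0$) of $W$ with respect to $T$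 is a partition $(\mathcal{B}(1),\ldots,\mathcal{B}(L))$ of $W$ with: (1) if $z\le|W|$, $|\mathcal{B}(i)|\ge z(i+1)/2$ for all $i$; otherwise it is trivial, $\mathcal{B}(1):=W$; (2) $|\mathcal{B}(1)|\le\frac52 z$; (3) $|\mathcal{B}(i+1)|/|\mathcal{B}(i)|\le3/2$; (4) $\rho(x,T)\ge\rho(x',T)$ whenever $x\in\mathcal{B}(i)$, $x'\in\mathcal{B}(i+1)$. *)

theory Defs
  imports Complex_Main
begin

definition metric_on :: "'a set \<Rightarrow> ('a \<Rightarrow> 'a \<Rightarrow> real) \<Rightarrow> bool" where
  "metric_on X rho \<longleftrightarrow>
     (\<forall>x\<in>X. \<forall>y\<in>X. rho x y \<ge> 0) \<and>
     (\<forall>x\<in>X. \<forall>y\<in>X. rho x y = 0 \<longleftrightarrow> x = y) \<and>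
     (\<forall>x\<in>X. \<forall>y\<in>X. rho x y = rho y x) \<and>
     (\<forall>x\<in>X. \<forall>y\<in>X. \<forall>z\<in>X. rho x z \<le> rho x y + rho y z)"

definition phi :: "nat \<Rightarrow> real \<Rightarrow> real \<Rightarrow> real" where
  "phi k \<delta> \<alpha> = 150 * ln (32 * real k / \<delta>) / \<alpha>"

definition dist_to :: "('a \<Rightarrow> 'a \<Rightarrow> real) \<Rightarrow> 'a \<Rightarrow> 'a set \<Rightarrow> real" where
  "dist_to rho x T = Min ((rho x) ` T)"

definition Rcost :: "('a \<Rightarrow> 'a \<Rightarrow> real) \<Rightarrow> 'a set \<Rightarrow> 'a set \<Rightarrow> real" where
  "Rcost rho S T = (\<Sum>x\<in>S. dist_to rho x T)"

text \<open>x is strictly further from T than y, ties broken by the fixed (linear) order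
  of the point type: among equally distant points, the smaller one counts as further.\<close>
definition further :: "('a::linorder \<Rightarrow> 'a \<Rightarrow> real) \<Rightarrow> 'a set \<Rightarrow> 'a \<Rightarrow> 'a \<Rightarrow> bool" where
  "further rho T x y \<longleftrightarrow>
     dist_to rho x T > dist_to rho y T \<or> (dist_to rho x T = dist_to rho y T \<and> x < y)"

text \<open>far_r(S,T): the ceiling(r) points of S furthest from T; S itself if |S| < r.\<close>
definition far :: "('a::linorder \<Rightarrow> 'a \<Rightarrow> real) \<Rightarrow> real \<Rightarrow> 'a set \<Rightarrow> 'a set \<Rightarrow> 'a set" where
  "far rho r S T =
     (if real (card S) < r then S
      else {x\<in>S. int (card {y\<in>S. further rho T y x}) < \<lceil>r\<rceil>})"

definition well_represented :: "'a set \<Rightarrow> 'a set \<Rightarrow> 'a set \<Rightarrow> bool" where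
  "well_represented W A B \<longleftrightarrow>
     (let r = real (card A) / real (card W);
          q = real (card (B \<inter> A)) / real (card B)
      in r / 2 \<le> q \<and> q \<le> 3 / 2 * r)"

definition bins_well_represented :: "'a set \<Rightarrow> 'a set \<Rightarrow> (nat \<Rightarrow> 'a set) \<Rightarrow> nat \<Rightarrow> bool" where
  "bins_well_represented W A B L \<longleftrightarrow> (\<forall>i\<in>{1..L}. well_represented W A (B i))"

definition linear_bin_division ::
  "('a \<Rightarrow> 'a \<Rightarrow> real) \<Rightarrow> real \<Rightarrow> 'a set \<Rightarrow> 'a set \<Rightarrow> (nat \<Rightarrow> 'a set) \<Rightarrow> nat \<Rightarrow> bool" where
  "linear_bin_division rho z W T B L \<longleftrightarrow>
     L \<ge> 1 \<and>
     (\<Union>i\<in>{1..L}. B i) = W \<and>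
     (\<forall>i\<in>{1..L}. \<forall>j\<in>{1..L}. i \<noteq> j \<longrightarrow> B i \<inter> B j = {}) \<and>
     (if z \<le> real (card W)
      then (\<forall>i\<in>{1..L}. real (card (B i)) \<ge> z * (real i + 1) / 2)
      else L = 1 \<and> B 1 = W) \<and>
     real (card (B 1)) \<le> 5 / 2 * z \<and>
     (\<forall>i\<in>{1..<L}. real (card (B (i + 1))) / real (card (B i)) \<le> 3 / 2) \<and>
     (\<forall>i\<in>{1..<L}. \<forall>x\<in>B i. \<forall>x'\<in>B (i + 1). dist_to rho x T \<ge> dist_to rho x' T)"

end

theory Submission
  imports Defs
begin

text \<open>Every point of B(i) is at least as far from T as every point of B(i+1), so the
  average distance over the sample B(i) \<inter> P2 dominates the average over B(i+1).
  Well-representation gives |B(i) \<inter> P2| \<ge> (r/2) |B(i)| with r = |P2|/|X - P1| \<ge> \<alpha>, and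
  |B(i+1)| \<le> (3/2) |B(i)|; hence |B(i) \<inter> P2| \<ge> (\<alpha>/3) |B(i+1)|, and comparing averages
  turns this count bound into the cost bound.\<close>

lemma dist_to_nonneg:
  assumes "metric_on X rho" "finite T" "T \<noteq> {}" "T \<subseteq> X" "x \<in> X"
  shows "0 \<le> dist_to rho x T"
proof -
  have "\<forall>y\<in>T. 0 \<le> rho x y" using assms(1,4,5) unfolding metric_on_def by blast
  then show ?thesis unfolding dist_to_def using assms(2,3) by (simp add: Min_ge_iff)
qed

lemma card_mult_sum_le_card_mult_sum:
  fixes f :: "'a \<Rightarrow> real"
  assumes "\<forall>x\<in>A. \<forall>y\<in>B. f y \<le> f x"
  shows "real (card A) * sum f B \<le> real (card B) * sum f A"
proof -
  have "real (card A) * sum f B = (\<Sum>x\<in>A. \<Sum>y\<in>B. f y)" by simp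
  also have "\<dots> \<le> (\<Sum>x\<in>A. \<Sum>y\<in>B. f x)" using assms by (intro sum_mono) auto
  also have "\<dots> = real (card B) * sum f A" by (simp add: sum_distrib_right mult.commute)
  finally show ?thesis .
qed

lemma scaled_sum_le_sum_of_dominated:
  fixes f :: "'a \<Rightarrow> real"
  assumes "finite B" "\<forall>x\<in>A. \<forall>y\<in>B. f y \<le> f x" "\<forall>x\<in>A \<union> B. 0 \<le> f x"
    and "c * real (card B) \<le> real (card A)"
  shows "c * sum f B \<le> sum f A"
proof (cases "B = {}")
  case True
  then show ?thesis using assms(3) by (simp add: sum_nonneg)
next
  case False
  then have "0 < real (card B)" using assms(1) by (simp add: card_gt_0_iff)
  moreover have "0 \<le> sum f B" using assms(3) by (simp add: sum_nonneg)
  then have "real (card B) * (c * sum f B) \<le> real (card A) * sum f B"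
    using assms(4) by (metis mult.assoc mult.commute mult_right_mono)
  ultimately show ?thesis
    using card_mult_sum_le_card_mult_sum[OF assms(2)] mult_le_cancel_left_pos by fastforce
qed

lemma density_in_complement_ge:
  assumes "finite X" "X \<noteq> {}" "P1 \<subseteq> X" "\<alpha> < 1"
    and "real (card P1) = \<alpha> * real (card X)" "real (card P2) = \<alpha> * real (card X)"
  shows "\<alpha> \<le> real (card P2) / real (card (X - P1))"
proof -
  have n: "0 < real (card X)" using assms(1,2) by (simp add: card_gt_0_iff)
  have "0 \<le> \<alpha>" using assms(6) n by (metis of_nat_0_le_iff zero_le_mult_iff not_le)
  have "real (card (X - P1)) = (1 - \<alpha>) * real (card X)"
    using assms(1,3,5) card_mono[OF assms(1,3)]
    by (simp add: card_Diff_subset finite_subset of_nat_diff algebra_simps)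
  then have "real (card P2) / real (card (X - P1)) = \<alpha> / (1 - \<alpha>)"
    using assms(6) n by simp
  also have "\<alpha> \<le> \<alpha> / (1 - \<alpha>)"
    using \<open>0 \<le> \<alpha>\<close> assms(4) by (simp add: le_divide_eq mult_left_le)
  finally show ?thesis by simp
qed

lemma well_represented_next_bin_card:
  assumes "well_represented W A S"
    and "real (card S') / real (card S) \<le> 3 / 2"
    and "c \<le> real (card A) / real (card W)"
  shows "c / 3 * real (card S') \<le> real (card (S \<inter> A))"
proof (cases "0 < c")
  case True
  define r where "r = real (card A) / real (card W)"
  have repr: "r / 2 \<le> real (card (S \<inter> A)) / real (card S)"
    using assms(1) unfolding well_represented_def r_def Let_def by simp
  have "0 < r" using True assms(3) unfolding r_def by simp
  then have S: "0 < real (card S)" using repr by (cases "card S = 0") auto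
  have "c / 3 * real (card S') \<le> c / 3 * (3 / 2 * real (card S))"
    using assms(2) S True by (simp add: divide_le_eq)
  also have "\<dots> = c / 2 * real (card S)" by simp
  also have "\<dots> \<le> r / 2 * real (card S)"
    using assms(3) S unfolding r_def by (intro mult_right_mono) auto
  also have "\<dots> \<le> real (card (S \<inter> A))"
    using repr S by (simp add: le_divide_eq)
  finally show ?thesis .
next
  case False
  then have "c / 3 * real (card S') \<le> 0" by (simp add: mult_nonpos_nonneg)
  then show ?thesis by (meson of_nat_0_le_iff order_trans)
qed

lemma linear_bin_division_bin_subset:
  assumes "linear_bin_division rho z W T B L" "i \<in> {1..L}"
  shows "B i \<subseteq> W"
  using assms unfolding linear_bin_division_def by blast

theorem lemma15:
  fixes X :: "'a::linorder set" and rho :: "'a \<Rightarrow> 'a \<Rightarrow> real"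
    and n k :: nat and \<delta> \<alpha> :: real
    and P1 P2 T :: "'a set" and B :: "nat \<Rightarrow> 'a set" and L :: nat
  assumes "finite X" and "metric_on X rho" and "n = card X"
    and "k \<ge> 2" and "0 < \<delta>" and "\<delta> < 1"
    and "0 < \<alpha>" and "\<alpha> \<le> 1 / 6" and "\<alpha> * real n \<in> \<int>"
    and "P1 \<subseteq> X" and "P2 \<subseteq> X" and "P1 \<inter> P2 = {}"
    and "real (card P1) = \<alpha> * real n" and "real (card P2) = \<alpha> * real n"
    and "T \<subseteq> X" and "T \<noteq> {}"
    and "linear_bin_division rho (phi k \<delta> \<alpha> / 3)
           ((X - P1) - far rho (4 * (real k + 1) * phi k \<delta> \<alpha>) (X - P1) T) T B L"
    and "bins_well_represented (X - P1) P2 B L"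
  shows "\<forall>i\<in>{1..<L}. Rcost rho (B i \<inter> P2) T \<ge> \<alpha> / 3 * Rcost rho (B (i + 1)) T"
proof
  fix i assume i: "i \<in> {1..<L}"
  note division = assms(17)
  have bins: "B i \<subseteq> X" "B (i + 1) \<subseteq> X"
    using linear_bin_division_bin_subset[OF division, of i]
      linear_bin_division_bin_subset[OF division, of "i + 1"] i by auto
  show "Rcost rho (B i \<inter> P2) T \<ge> \<alpha> / 3 * Rcost rho (B (i + 1)) T"
  proof (cases "X = {}")
    case True
    then show ?thesis using bins by (simp add: Rcost_def)
  next
    case False
    have "\<alpha> \<le> real (card P2) / real (card (X - P1))"
      using density_in_complement_ge[of X P1 \<alpha> P2] False assms(1,3,8,10,13,14)
      by simp
    moreover have "well_represented (X - P1) P2 (B i)"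
      using assms(18) i unfolding bins_well_represented_def by auto
    moreover have "real (card (B (i + 1))) / real (card (B i)) \<le> 3 / 2"
      using division i unfolding linear_bin_division_def by blast
    ultimately have "\<alpha> / 3 * real (card (B (i + 1))) \<le> real (card (B i \<inter> P2))"
      by (intro well_represented_next_bin_card)
    moreover have "\<forall>x\<in>B i \<inter> P2. \<forall>y\<in>B (i + 1). dist_to rho y T \<le> dist_to rho x T"
      using division i unfolding linear_bin_division_def by blast
    moreover have "\<forall>x\<in>(B i \<inter> P2) \<union> B (i + 1). 0 \<le> dist_to rho x T"
      using dist_to_nonneg[OF assms(2) finite_subset[OF assms(15,1)] assms(16,15)] bins by blast
    ultimately show ?thesis
      unfolding Rcost_def using bins assms(1)
      by (intro scaled_sum_le_sum_of_dominated) (auto intro: finite_subset)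
  qed
qed

end
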